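(* Let $G=(V,A)$ be a minimally Eulerian digraph. Then $|A| \le \sqrt{2(|V|-1)}\,|V| + |V| - 1$.
   Context: Digraphs are simple. A connected digraph is Eulerian if every vertex has indegree equal to outdegree (equivalently, it has a closed walk using every arc exactly once). A digraph $G$ is minimally Eulerian if it is a connected Eulerian digraph that contains no proper connected Eulerian spanning subgraph (a subgraph on all vertices of $G$ with a proper subset of the arcs); equivalently, for every directed cycle $C$ of $G$, the digraph $(V, A\setminus A(C))$ is disconnected. *)

theory Defs
  imports Complex_Main
begin

text \<open>A simple digraph on a finite vertex set V with arc set A: arcs are ordered
pairs of distinct vertices of V (no loops; no parallel arcs since A is a set;
opposite arcs are allowed).\<close>
definition simple_digraph :: "'a set \<Rightarrow> ('a \<times> 'a) set \<Rightarrow> bool" where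
  "simple_digraph V A \<longleftrightarrow> finite V \<and> A \<subseteq> V \<times> V \<and> (\<forall>v. (v, v) \<notin> A)"

definition connected_digraph :: "'a set \<Rightarrow> ('a \<times> 'a) set \<Rightarrow> bool" where
  "connected_digraph V A \<longleftrightarrow> V \<noteq> {} \<and>
     (\<forall>u\<in>V. \<forall>v\<in>V. (u, v) \<in> (A \<union> A\<inverse>)\<^sup>*)"

definition indeg :: "('a \<times> 'a) set \<Rightarrow> 'a \<Rightarrow> nat" where
  "indeg A v = card {u. (u, v) \<in> A}"

definition outdeg :: "('a \<times> 'a) set \<Rightarrow> 'a \<Rightarrow> nat" where
  "outdeg A v = card {w. (v, w) \<in> A}"

definition eulerian_digraph :: "'a set \<Rightarrow> ('a \<times> 'a) set \<Rightarrow> bool" where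
  "eulerian_digraph V A \<longleftrightarrow> connected_digraph V A \<and> (\<forall>v\<in>V. indeg A v = outdeg A v)"

definition minimally_eulerian :: "'a set \<Rightarrow> ('a \<times> 'a) set \<Rightarrow> bool" where
  "minimally_eulerian V A \<longleftrightarrow> simple_digraph V A \<and> eulerian_digraph V A \<and>
     \<not> (\<exists>A'. A' \<subset> A \<and> eulerian_digraph V A')"

end

(* Let n = |V|.  A spanning tree T of the underlying undirected graph has at
   most n - 1 arcs.  The remaining arcs D = A - T form an acyclic digraph: a
   directed cycle in D would be a balanced subgraph whose removal keeps T, hence
   connectivity and balance, contradicting minimality.  Number the vertices
   0, ..., n - 1 along a topological order of D.  Since A is balanced, the
   numbering increases by a total of zero along all arcs, so its total increase
   along D equals its total decrease along T, which is at most
   |T| (n - 1) <= n (n - 1).  On the other hand an arc of D is determined by its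
   tail and its increase, so at most n (i - 1) arcs of D increase by less than i,
   and the total increase along D is at least k |D| - n k (k - 1) / 2 for every k.
   Taking k close to sqrt (2 (n - 1)) yields |D| <= n sqrt (2 (n - 1)). *)

theory Submission
  imports Defs
begin

lemma rtrancl_exits_set:
  assumes "(u, w) \<in> R\<^sup>*" "u \<in> S" "w \<notin> S"
  shows "\<exists>x y. (x, y) \<in> R \<and> x \<in> S \<and> y \<notin> S"
  using assms by (induction rule: rtrancl_induct) blast+

lemma connected_digraph_mono:
  assumes "connected_digraph V T" "T \<subseteq> A"
  shows "connected_digraph V A"
proof -
  have "(T \<union> T\<inverse>)\<^sup>* \<subseteq> (A \<union> A\<inverse>)\<^sup>*"
    using assms(2) by (intro rtrancl_mono) auto
  then show ?thesis
    using assms(1) unfolding connected_digraph_def by blast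
qed

lemma connected_digraph_partial_spanning_tree:
  assumes "finite V" "A \<subseteq> V \<times> V" "connected_digraph V A" "v0 \<in> V" "k < card V"
  shows "\<exists>S T. S \<subseteq> V \<and> card S = Suc k \<and> T \<subseteq> A \<and> card T \<le> k \<and> S \<subseteq> (T \<union> T\<inverse>)\<^sup>* `` {v0}"
  using \<open>k < card V\<close>
proof (induction k)
  case 0
  show ?case
    by (rule exI[of _ "{v0}"], rule exI[of _ "{}"]) (use assms(4) in auto)
next
  case (Suc k)
  then obtain S T where S: "S \<subseteq> V" "card S = Suc k" "T \<subseteq> A" "card T \<le> k"
    and reach: "S \<subseteq> (T \<union> T\<inverse>)\<^sup>* `` {v0}"
    by auto
  have "S \<noteq> V"
    using S(2) Suc.prems by auto
  then obtain w where w: "w \<in> V" "w \<notin> S"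
    using S(1) by blast
  obtain s where s: "s \<in> S"
    using S(2) by fastforce
  have "(s, w) \<in> (A \<union> A\<inverse>)\<^sup>*"
    using assms(3) S(1) s w(1) unfolding connected_digraph_def by blast
  from rtrancl_exits_set[OF this s w(2)]
  obtain x y where xy: "(x, y) \<in> A \<union> A\<inverse>" "x \<in> S" "y \<notin> S"
    by blast
  define e where "e = (if (x, y) \<in> A then (x, y) else (y, x))"
  define T' where "T' = insert e T"
  have "e \<in> A"
    using xy(1) by (auto simp: e_def)
  have "(T \<union> T\<inverse>)\<^sup>* \<subseteq> (T' \<union> T'\<inverse>)\<^sup>*"
    unfolding T'_def by (intro rtrancl_mono) auto
  moreover have "(x, y) \<in> T' \<union> T'\<inverse>"
    by (auto simp: T'_def e_def)
  ultimately have "insert y S \<subseteq> (T' \<union> T'\<inverse>)\<^sup>* `` {v0}"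
    using reach xy(2) by (auto intro: rtrancl_into_rtrancl)
  moreover have "card (insert y S) = Suc (Suc k)"
    using S(1,2) xy(3) assms(1) finite_subset by fastforce
  moreover have "card T' \<le> Suc k"
    using S(4) unfolding T'_def by (intro card_insert_le_m1) auto
  moreover have "y \<in> V"
    using xy(1) assms(2) by auto
  ultimately have "insert y S \<subseteq> V \<and> card (insert y S) = Suc (Suc k) \<and> T' \<subseteq> A \<and> card T' \<le> Suc k
      \<and> insert y S \<subseteq> (T' \<union> T'\<inverse>)\<^sup>* `` {v0}"
    using S(1,3) \<open>e \<in> A\<close> by (auto simp: T'_def)
  then show ?case
    by blast
qed

lemma connected_digraph_spanning_tree:
  assumes "finite V" "A \<subseteq> V \<times> V" "connected_digraph V A"
  obtains T where "T \<subseteq> A" "card T \<le> card V - 1" "connected_digraph V T"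
proof -
  obtain v0 where v0: "v0 \<in> V"
    using assms(3) unfolding connected_digraph_def by blast
  then have "card V - 1 < card V"
    using assms(1) card_gt_0_iff by (metis diff_less empty_iff zero_less_one)
  from connected_digraph_partial_spanning_tree[OF assms v0 this]
  obtain S T where S: "S \<subseteq> V" "card S = Suc (card V - 1)" "T \<subseteq> A" "card T \<le> card V - 1"
    and reach: "S \<subseteq> (T \<union> T\<inverse>)\<^sup>* `` {v0}"
    by blast
  have "S = V"
    using card_subset_eq[OF assms(1) S(1)] S(2) \<open>card V - 1 < card V\<close> by simp
  have "sym ((T \<union> T\<inverse>)\<^sup>*)"
    by (simp add: sym_Un_converse sym_rtrancl)
  then have "connected_digraph V T"
    using reach v0 unfolding \<open>S = V\<close> connected_digraph_def by (blast dest: symD intro: rtrancl_trans)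
  then show thesis
    using that S(3,4) by blast
qed

lemma indeg_eq_outdeg_converse: "indeg A v = outdeg (A\<inverse>) v"
  by (simp add: indeg_def outdeg_def)

lemma outdeg_Diff:
  assumes "finite C" "C \<subseteq> A"
  shows "outdeg (A - C) v = outdeg A v - outdeg C v"
proof -
  have "{w. (v, w) \<in> A - C} = {w. (v, w) \<in> A} - {w. (v, w) \<in> C}"
    by auto
  moreover have "finite {w. (v, w) \<in> C}"
    using finite_Image[OF assms(1), of "{v}"] by (simp add: Image_singleton)
  ultimately show ?thesis
    unfolding outdeg_def using assms(2) by (auto intro: card_Diff_subset)
qed

lemma indeg_Diff:
  assumes "finite C" "C \<subseteq> A"
  shows "indeg (A - C) v = indeg A v - indeg C v"
proof -
  have "(A - C)\<inverse> = A\<inverse> - C\<inverse>"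
    by auto
  then show ?thesis
    using outdeg_Diff[of "C\<inverse>" "A\<inverse>" v] assms by (simp add: indeg_eq_outdeg_converse)
qed

lemma sum_tails_eq_sum_outdeg:
  fixes h :: "'a \<Rightarrow> 'b::comm_semiring_1"
  assumes "finite V" "A \<subseteq> V \<times> V"
  shows "(\<Sum>(x, y)\<in>A. h x) = (\<Sum>v\<in>V. of_nat (outdeg A v) * h v)"
proof -
  have "A = (SIGMA v:V. A `` {v})"
    using assms(2) by auto
  then have "(\<Sum>(x, y)\<in>A. h x) = (\<Sum>(x, y)\<in>(SIGMA v:V. A `` {v}). h x)"
    by simp
  also have "\<dots> = (\<Sum>v\<in>V. \<Sum>w\<in>A `` {v}. h v)"
    using assms finite_subset[OF assms(2)] by (subst sum.Sigma) auto
  finally show ?thesis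
    by (simp add: outdeg_def Image_singleton)
qed

lemma sum_heads_eq_sum_indeg:
  fixes h :: "'a \<Rightarrow> 'b::comm_semiring_1"
  assumes "finite V" "A \<subseteq> V \<times> V"
  shows "(\<Sum>(x, y)\<in>A. h y) = (\<Sum>v\<in>V. of_nat (indeg A v) * h v)"
proof -
  have "(\<Sum>(x, y)\<in>A. h y) = (\<Sum>(y, x)\<in>A\<inverse>. h y)"
    by (rule sum.reindex_bij_witness[of _ prod.swap prod.swap]) auto
  also have "\<dots> = (\<Sum>v\<in>V. of_nat (indeg A v) * h v)"
    using sum_tails_eq_sum_outdeg[of V "A\<inverse>" h] assms by (auto simp: indeg_eq_outdeg_converse)
  finally show ?thesis .
qed

lemma balanced_sum_potential_difference:
  fixes h :: "'a \<Rightarrow> 'b::comm_ring_1"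
  assumes "finite V" "A \<subseteq> V \<times> V" "\<forall>v\<in>V. indeg A v = outdeg A v"
  shows "(\<Sum>(x, y)\<in>A. h y - h x) = 0"
  using sum_heads_eq_sum_indeg[OF assms(1,2), of h] sum_tails_eq_sum_outdeg[OF assms(1,2), of h] assms(3)
  by (simp add: sum_subtractf case_prod_unfold)

lemma finite_self_map_invariant_subset:
  assumes "finite S" "S \<noteq> {}" "f ` S \<subseteq> S"
  obtains P where "P \<subseteq> S" "P \<noteq> {}" "f ` P = P"
proof -
  let ?closed = "\<lambda>P. P \<subseteq> S \<and> P \<noteq> {} \<and> f ` P \<subseteq> P"
  obtain P where P: "?closed P" and min: "\<And>P'. ?closed P' \<Longrightarrow> card P \<le> card P'"
    using ex_has_least_nat[of ?closed S card] assms by blast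
  have "?closed (f ` P)"
    using P by blast
  then have "card P \<le> card (f ` P)"
    by (rule min)
  moreover have "finite P"
    using P assms(1) finite_subset by blast
  ultimately have "f ` P = P"
    using P card_seteq by blast
  then show thesis
    using that P by blast
qed

lemma permutation_graph_balanced:
  assumes "finite P" "f ` P = P"
  shows "indeg ((\<lambda>v. (v, f v)) ` P) v = outdeg ((\<lambda>v. (v, f v)) ` P) v"
proof -
  have "inj_on f P"
    using assms by (simp add: eq_card_imp_inj_on)
  then have "{u \<in> P. f u = v} = (if v \<in> P then {the_inv_into P f v} else {})"
    using assms(2) by (auto simp: the_inv_into_f_f f_the_inv_into_f the_inv_into_into)
  moreover have "{u. (u, v) \<in> (\<lambda>v. (v, f v)) ` P} = {u \<in> P. f u = v}"
    by auto
  moreover have "{w. (v, w) \<in> (\<lambda>v. (v, f v)) ` P} = (if v \<in> P then {f v} else {})"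
    by auto
  ultimately show ?thesis
    unfolding indeg_def outdeg_def by simp
qed

lemma cyclic_imp_balanced_subgraph:
  assumes "finite D" "\<not> acyclic D"
  obtains C where "C \<subseteq> D" "C \<noteq> {}" "\<And>v. indeg C v = outdeg C v"
proof -
  have "\<not> wf (D\<inverse>)"
    using assms(2) wf_acyclic acyclic_converse by blast
  then obtain Q q where "q \<in> Q" and "\<forall>z\<in>Q. \<exists>y. (z, y) \<in> D \<and> y \<in> Q"
    unfolding wf_eq_minimal by auto
  then obtain f where f: "\<forall>z\<in>Q. f z \<in> Q \<and> (z, f z) \<in> D"
    by metis
  have "Q \<subseteq> fst ` D"
    using f by force
  then have "finite Q"
    using assms(1) finite_subset by blast
  then obtain P where P: "P \<subseteq> Q" "P \<noteq> {}" "f ` P = P"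
    using finite_self_map_invariant_subset[of Q f] f \<open>q \<in> Q\<close> by blast
  have "finite P"
    using P(1) \<open>finite Q\<close> finite_subset by blast
  show thesis
  proof (rule that)
    show "(\<lambda>v. (v, f v)) ` P \<subseteq> D"
      using P(1) f by blast
    show "(\<lambda>v. (v, f v)) ` P \<noteq> {}"
      using P(2) by blast
    show "indeg ((\<lambda>v. (v, f v)) ` P) v = outdeg ((\<lambda>v. (v, f v)) ` P) v" for v
      using permutation_graph_balanced[OF \<open>finite P\<close> P(3)] .
  qed
qed

lemma wf_converse_topological_numbering:
  assumes "finite W" "wf (D\<inverse>)"
  shows "\<exists>\<pi> :: 'a \<Rightarrow> nat. inj_on \<pi> W \<and> \<pi> ` W \<subseteq> {..<card W}
           \<and> (\<forall>x\<in>W. \<forall>y\<in>W. (x, y) \<in> D \<longrightarrow> \<pi> x < \<pi> y)"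
  using assms(1)
proof (induction W rule: finite_remove_induct)
  case empty
  show ?case
    by simp
next
  case (remove W)
  obtain v where v: "v \<in> W" and sink: "\<And>y. (v, y) \<in> D \<Longrightarrow> y \<notin> W"
    using assms(2)[unfolded wf_eq_minimal] remove.hyps(2) by (metis converse_iff ex_in_conv)
  obtain \<pi> :: "'a \<Rightarrow> nat" where \<pi>: "inj_on \<pi> (W - {v})" "\<pi> ` (W - {v}) \<subseteq> {..<card W - 1}"
    and mono: "\<forall>x\<in>W - {v}. \<forall>y\<in>W - {v}. (x, y) \<in> D \<longrightarrow> \<pi> x < \<pi> y"
    using remove.IH[OF v] remove.hyps(1) v by auto
  define \<sigma> where "\<sigma> = \<pi>(v := card W - 1)"
  have "W = insert v (W - {v})"
    using v by blast
  moreover have "inj_on \<sigma> (W - {v})" "\<sigma> v \<notin> \<sigma> ` (W - {v})"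
    using \<pi> unfolding \<sigma>_def by (auto simp: inj_on_def)
  ultimately have "inj_on \<sigma> W"
    by (metis Diff_idemp inj_on_insert)
  moreover have "\<sigma> ` W \<subseteq> {..<card W}"
  proof -
    have "card W > 0"
      using remove.hyps(1) v card_gt_0_iff by blast
    then show ?thesis
      using \<pi>(2) unfolding \<sigma>_def by (force simp: image_subset_iff)
  qed
  moreover have "\<sigma> x < \<sigma> y" if "x \<in> W" "y \<in> W" "(x, y) \<in> D" for x y
  proof -
    have "x \<noteq> v"
      using sink that(2,3) by blast
    then show ?thesis
      using that mono \<pi>(2) unfolding \<sigma>_def by (cases "y = v") (force simp: image_subset_iff)+
  qed
  ultimately show ?case
    by auto
qed

lemma acyclic_topological_numbering:
  assumes "finite V" "D \<subseteq> V \<times> V" "acyclic D"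
  obtains \<pi> :: "'a \<Rightarrow> nat"
  where "inj_on \<pi> V" "\<pi> ` V \<subseteq> {..<card V}" "\<And>x y. (x, y) \<in> D \<Longrightarrow> \<pi> x < \<pi> y"
proof -
  have "finite D"
    using assms(1,2) finite_subset by auto
  then have "wf (D\<inverse>)"
    using assms(3) by (rule finite_acyclic_wf_converse)
  from wf_converse_topological_numbering[OF assms(1) this]
  obtain \<pi> :: "'a \<Rightarrow> nat" where \<pi>: "inj_on \<pi> V" "\<pi> ` V \<subseteq> {..<card V}"
    and mono: "\<forall>x\<in>V. \<forall>y\<in>V. (x, y) \<in> D \<longrightarrow> \<pi> x < \<pi> y"
    by blast
  show thesis
  proof (rule that[OF \<pi>])
    show "\<pi> x < \<pi> y" if "(x, y) \<in> D" for x y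
      using that mono assms(2) by blast
  qed
qed

lemma minimally_eulerian_acyclic_Diff:
  assumes "minimally_eulerian V A" "T \<subseteq> A" "connected_digraph V T"
  shows "acyclic (A - T)"
proof (rule ccontr)
  assume "\<not> acyclic (A - T)"
  from assms(1) have "finite V" "A \<subseteq> V \<times> V" and balanced: "\<forall>v\<in>V. indeg A v = outdeg A v"
    and minimal: "\<not> (\<exists>A'. A' \<subset> A \<and> eulerian_digraph V A')"
    unfolding minimally_eulerian_def simple_digraph_def eulerian_digraph_def by auto
  then have "finite A"
    by (simp add: finite_subset)
  then obtain C where C: "C \<subseteq> A - T" "C \<noteq> {}" "\<And>v. indeg C v = outdeg C v"
    using cyclic_imp_balanced_subgraph[of "A - T"] \<open>\<not> acyclic (A - T)\<close> by auto
  have "finite C"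
    using C(1) \<open>finite A\<close> by (simp add: finite_subset)
  have "C \<subseteq> A" "T \<subseteq> A - C"
    using C(1) assms(2) by auto
  then have "eulerian_digraph V (A - C)"
    using connected_digraph_mono[OF assms(3)] balanced C(3)
    by (simp add: eulerian_digraph_def indeg_Diff[OF \<open>finite C\<close>] outdeg_Diff[OF \<open>finite C\<close>])
  moreover have "A - C \<subset> A"
    using C(1,2) by blast
  ultimately show False
    using minimal by blast
qed

lemma card_arcs_with_small_increase:
  fixes \<pi> :: "'a \<Rightarrow> nat"
  assumes "finite V" "D \<subseteq> V \<times> V" "inj_on \<pi> V" "\<And>x y. (x, y) \<in> D \<Longrightarrow> \<pi> x < \<pi> y"
  shows "card {(x, y) \<in> D. \<pi> y - \<pi> x < i} \<le> card V * (i - 1)"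
proof -
  let ?small = "{(x, y) \<in> D. \<pi> y - \<pi> x < i}"
  let ?tail_increase = "\<lambda>(x, y). (x, \<pi> y - \<pi> x)"
  have "inj_on ?tail_increase ?small"
  proof (rule inj_onI)
    fix a b
    assume "a \<in> ?small" "b \<in> ?small" "?tail_increase a = ?tail_increase b"
    then obtain x y y' where ab: "a = (x, y)" "b = (x, y')"
      and arcs: "(x, y) \<in> D" "(x, y') \<in> D" and "\<pi> y - \<pi> x = \<pi> y' - \<pi> x"
      by auto
    then have "\<pi> y = \<pi> y'"
      using assms(4)[OF arcs(1)] assms(4)[OF arcs(2)] by linarith
    moreover have "y \<in> V" "y' \<in> V"
      using arcs assms(2) by auto
    ultimately have "y = y'"
      by (meson assms(3) inj_onD)
    then show "a = b"
      using ab by simp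
  qed
  moreover have "?tail_increase ` ?small \<subseteq> V \<times> {1..<i}"
  proof
    fix b
    assume "b \<in> ?tail_increase ` ?small"
    then obtain x y where "b = (x, \<pi> y - \<pi> x)" "(x, y) \<in> D" "\<pi> y - \<pi> x < i"
      by auto
    moreover have "x \<in> V" "\<pi> x < \<pi> y"
      using \<open>(x, y) \<in> D\<close> assms(2,4) by auto
    ultimately show "b \<in> V \<times> {1..<i}"
      by auto
  qed
  ultimately have "card ?small \<le> card (V \<times> {1..<i})"
    by (rule card_inj_on_le) (simp add: assms(1))
  then show ?thesis
    by (simp add: card_cartesian_product)
qed

lemma sum_card_superlevel_sets_le_sum:
  fixes g :: "'b \<Rightarrow> nat"
  assumes "finite D"
  shows "(\<Sum>i=1..k. card {a \<in> D. i \<le> g a}) \<le> (\<Sum>a\<in>D. g a)"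
proof -
  have "(\<Sum>i=1..k. card {a \<in> D. i \<le> g a}) = (\<Sum>i=1..k. \<Sum>a\<in>D. if i \<le> g a then 1 else 0)"
    by (intro sum.cong refl) (simp only: card_eq_sum sum.inter_filter[OF assms])
  also have "\<dots> = (\<Sum>a\<in>D. \<Sum>i=1..k. if i \<le> g a then 1 else 0)"
    by (rule sum.swap)
  also have "\<dots> = (\<Sum>a\<in>D. card {i \<in> {1..k}. i \<le> g a})"
    by (intro sum.cong refl) (simp only: card_eq_sum sum.inter_filter[OF finite_atLeastAtMost])
  also have "\<dots> \<le> (\<Sum>a\<in>D. card {1..g a})"
    by (intro sum_mono card_mono) auto
  finally show ?thesis
    by simp
qed

lemma sum_increase_lower_bound:
  fixes \<pi> :: "'a \<Rightarrow> nat"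
  assumes "finite V" "D \<subseteq> V \<times> V" "inj_on \<pi> V" "\<And>x y. (x, y) \<in> D \<Longrightarrow> \<pi> x < \<pi> y"
  shows "real k * real (card D) - real (card V) * real k * (real k - 1) / 2
           \<le> (\<Sum>(x, y)\<in>D. real (\<pi> y) - real (\<pi> x))"
proof -
  define g where "g = (\<lambda>(x, y). \<pi> y - \<pi> x)"
  have "finite D"
    using assms(1,2) finite_subset by auto
  have level: "real (card D) - real (card V) * (real i - 1) \<le> real (card {a \<in> D. i \<le> g a})"
    if "1 \<le> i" for i
  proof -
    have "card {a \<in> D. g a < i} \<le> card V * (i - 1)"
      using card_arcs_with_small_increase[OF assms, of i] by (simp add: g_def case_prod_unfold)
    then have "real (card {a \<in> D. g a < i}) \<le> real (card V * (i - 1))"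
      by (simp only: of_nat_le_iff)
    also have "\<dots> = real (card V) * (real i - 1)"
      using that by (simp add: of_nat_diff)
    finally have small: "real (card {a \<in> D. g a < i}) \<le> real (card V) * (real i - 1)" .
    have "{a \<in> D. i \<le> g a} = D - {a \<in> D. g a < i}"
      by auto
    then have "card {a \<in> D. i \<le> g a} = card D - card {a \<in> D. g a < i}"
      using \<open>finite D\<close> by (simp add: card_Diff_subset)
    moreover have "card {a \<in> D. g a < i} \<le> card D"
      using \<open>finite D\<close> by (intro card_mono) auto
    ultimately show ?thesis
      using small by (simp add: of_nat_diff)
  qed
  have "real k * real (card D) - real (card V) * real k * (real k - 1) / 2
      = (\<Sum>i=1..k. real (card D) - real (card V) * (real i - 1))"
    by (induction k) (simp_all add: field_simps)
  also have "\<dots> \<le> (\<Sum>i=1..k. real (card {a \<in> D. i \<le> g a}))"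
    using level by (intro sum_mono) auto
  also have "\<dots> \<le> real (\<Sum>a\<in>D. g a)"
    using sum_card_superlevel_sets_le_sum[OF \<open>finite D\<close>, of g k] by (simp flip: of_nat_sum)
  also have "\<dots> = (\<Sum>(x, y)\<in>D. real (\<pi> y) - real (\<pi> x))"
    unfolding of_nat_sum g_def
    using assms(4) by (intro sum.cong) (auto simp: of_nat_diff less_imp_le)
  finally show ?thesis .
qed

lemma balanced_sum_increase_Diff_le:
  fixes \<pi> :: "'a \<Rightarrow> nat"
  assumes "finite V" "A \<subseteq> V \<times> V" "\<forall>v\<in>V. indeg A v = outdeg A v" "T \<subseteq> A"
    and "\<pi> ` V \<subseteq> {..<card V}"
  shows "(\<Sum>(x, y)\<in>A - T. real (\<pi> y) - real (\<pi> x)) \<le> real (card T) * (real (card V) - 1)"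
proof -
  have "finite A"
    using assms(1,2) finite_subset by auto
  then have "(\<Sum>(x, y)\<in>A - T. real (\<pi> y) - real (\<pi> x))
      = (\<Sum>(x, y)\<in>A. real (\<pi> y) - real (\<pi> x)) - (\<Sum>(x, y)\<in>T. real (\<pi> y) - real (\<pi> x))"
    using assms(4) by (rule sum_diff)
  also have "\<dots> = (\<Sum>(x, y)\<in>T. real (\<pi> x) - real (\<pi> y))"
    using balanced_sum_potential_difference[OF assms(1-3), of "\<lambda>v. real (\<pi> v)"]
    by (simp add: case_prod_unfold sum_subtractf)
  also have "\<dots> \<le> real (card T) * (real (card V) - 1)"
  proof (rule sum_bounded_above, clarify)
    fix x y
    assume "(x, y) \<in> T"
    then have "\<pi> x < card V"
      using assms(2,4,5) by blast
    then show "real (\<pi> x) - real (\<pi> y) \<le> real (card V) - 1"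
      by linarith
  qed
  finally show ?thesis .
qed

lemma le_mult_sqrt_of_quadratic_bounds:
  fixes m n :: nat
  assumes "n \<ge> 1"
    and bound: "\<And>k::nat. real k * real m - real n * real k * (real k - 1) / 2 \<le> real n * (real n - 1)"
  shows "real m \<le> real n * sqrt (2 * (real n - 1))"
proof (rule ccontr)
  define s where "s = sqrt (2 * (real n - 1))"
  assume "\<not> real m \<le> real n * sqrt (2 * (real n - 1))"
  then have "real n * s < real m"
    unfolding s_def by simp
  have "s \<ge> 0" "s * s = 2 * (real n - 1)"
    using assms(1) unfolding s_def by auto
  define k where "k = max 1 (nat \<lceil>s\<rceil>)"
  have k: "s \<le> real k" "real k \<le> s + 1" "1 \<le> real k"
    unfolding k_def using \<open>s \<ge> 0\<close> by linarith+
  then have "(real k - s) * (real k - s) \<le> real k - s"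
    by (intro mult_left_le) auto
  moreover have "(real k - s) * (real k - s) = real k * real k - 2 * real k * s + s * s"
    by (simp add: algebra_simps)
  ultimately have "2 * (real n - 1) \<le> 2 * real k * s - real k * real k + real k"
    using \<open>s \<ge> 0\<close> \<open>s * s = 2 * (real n - 1)\<close> by linarith
  then have "real n - 1 \<le> real k * s - real k * (real k - 1) / 2"
    by (simp add: field_simps)
  then have "real n * (real n - 1) \<le> real n * (real k * s - real k * (real k - 1) / 2)"
    by (simp add: mult_left_mono)
  also have "\<dots> < real k * real m - real n * real k * (real k - 1) / 2"
    using \<open>real n * s < real m\<close> k(3) by (simp add: algebra_simps)
  finally show False
    using bound[of k] by linarith
qed

lemma card_acyclic_rest_le:
  assumes "finite V" "V \<noteq> {}" "A \<subseteq> V \<times> V" "\<forall>v\<in>V. indeg A v = outdeg A v"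
    and "T \<subseteq> A" "card T \<le> card V - 1" "acyclic (A - T)"
  shows "real (card (A - T)) \<le> real (card V) * sqrt (2 * (real (card V) - 1))"
proof -
  have "card V \<ge> 1"
    using assms(1,2) by (simp add: Suc_leI card_gt_0_iff)
  have "A - T \<subseteq> V \<times> V"
    using assms(3) by blast
  then obtain \<pi> :: "'a \<Rightarrow> nat" where \<pi>: "inj_on \<pi> V" "\<pi> ` V \<subseteq> {..<card V}"
    "\<And>x y. (x, y) \<in> A - T \<Longrightarrow> \<pi> x < \<pi> y"
    using acyclic_topological_numbering[OF assms(1) _ assms(7)] by blast
  have "(\<Sum>(x, y)\<in>A - T. real (\<pi> y) - real (\<pi> x)) \<le> real (card T) * (real (card V) - 1)"
    by (rule balanced_sum_increase_Diff_le[OF assms(1,3,4,5) \<pi>(2)])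
  also have "\<dots> \<le> real (card V) * (real (card V) - 1)"
    using assms(6) \<open>card V \<ge> 1\<close> by (intro mult_right_mono) auto
  finally show ?thesis
    using sum_increase_lower_bound[OF assms(1) \<open>A - T \<subseteq> V \<times> V\<close> \<pi>(1,3)]
    by (intro le_mult_sqrt_of_quadratic_bounds[OF \<open>card V \<ge> 1\<close>]) (rule order_trans)
qed

theorem proposition1p3:
  fixes V :: "'a set" and A :: "('a \<times> 'a) set"
  assumes "minimally_eulerian V A"
  shows "real (card A) \<le> sqrt (2 * (real (card V) - 1)) * real (card V) + real (card V) - 1"
proof -
  from assms have "finite V" "V \<noteq> {}" "A \<subseteq> V \<times> V" "connected_digraph V A"
    and balanced: "\<forall>v\<in>V. indeg A v = outdeg A v"
    unfolding minimally_eulerian_def simple_digraph_def eulerian_digraph_def connected_digraph_def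
    by auto
  then have "finite A"
    by (simp add: finite_subset)
  obtain T where T: "T \<subseteq> A" "card T \<le> card V - 1" "connected_digraph V T"
    using connected_digraph_spanning_tree[OF \<open>finite V\<close> \<open>A \<subseteq> V \<times> V\<close> \<open>connected_digraph V A\<close>] .
  have "real (card (A - T)) \<le> real (card V) * sqrt (2 * (real (card V) - 1))"
    using minimally_eulerian_acyclic_Diff[OF assms T(1,3)]
    by (rule card_acyclic_rest_le[OF \<open>finite V\<close> \<open>V \<noteq> {}\<close> \<open>A \<subseteq> V \<times> V\<close> balanced T(1,2)])
  moreover have "card A = card T + card (A - T)"
    using \<open>finite A\<close> T(1) by (metis card_Diff_subset card_mono finite_subset le_add_diff_inverse)
  moreover have "card V > 0"
    using \<open>finite V\<close> \<open>V \<noteq> {}\<close> by (simp add: card_gt_0_iff)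
  then have "real (card T) \<le> real (card V) - 1"
    using T(2) by linarith
  ultimately show ?thesis
    by (simp add: algebra_simps)
qed

end
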